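(* Let $(Z_k)_{k\in\mathbb{N}}$ be a sequence of independent random variables for which there exist $\alpha,\beta>0$ with $Z_k\in[\alpha,\beta]$ for all $k$. If there exists $p>\tfrac12$ such that $$\limsup_{n\to\infty}\frac{1}{n^p}\sum_{k=1}^n\mathbb{E}[\ln Z_k]<0,$$ then $\lim_{n\to\infty}\prod_{k=1}^nZ_k=0$ almost surely. *)

theory Defs
  imports "HOL-Probability.Probability"
begin

end

theory Submission
  imports Defs "HOL-Real_Asymp.Real_Asymp"
begin

text \<open>Write \<open>Y\<^sub>k = ln Z\<^sub>k\<close>, so that the product is \<open>exp\<close> of the partial sum \<open>S\<^sub>n\<close> of the
  \<open>Y\<^sub>k\<close>, which are independent and take values in \<open>[ln \<alpha>, ln \<beta>]\<close>. By Hoeffding's inequality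
  \<open>S\<^sub>n\<close> exceeds its mean by \<open>\<epsilon> n\<^sup>p\<close> with probability at most \<open>exp (-c n\<^sup>2\<^sup>p\<^sup>-\<^sup>1)\<close>; since
  \<open>2p - 1 > 0\<close> these probabilities are summable, so by Borel-Cantelli almost surely
  \<open>S\<^sub>n < E S\<^sub>n + \<epsilon> n\<^sup>p\<close> eventually. The limsup hypothesis gives \<open>E S\<^sub>n \<le> -2\<epsilon> n\<^sup>p\<close> eventually
  for a suitable \<open>\<epsilon> > 0\<close>, hence \<open>S\<^sub>n \<le> -\<epsilon> n\<^sup>p \<longrightarrow> -\<infinity>\<close> and the product tends to \<open>0\<close>.\<close>

lemma summable_exp_neg_powr:
  fixes c q :: real
  assumes "c > 0" "q > 0"
  shows "summable (\<lambda>n::nat. exp (-c * real n powr q))"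
proof (rule summable_comparison_test_ev)
  have "((\<lambda>n::nat. real n ^ 2 * exp (-c * real n powr q)) \<longlongrightarrow> 0) at_top"
    using assms by real_asymp
  then have "eventually (\<lambda>n::nat. real n ^ 2 * exp (-c * real n powr q) < 1) at_top"
    by (rule order_tendstoD) simp
  with eventually_gt_at_top[of "0::nat"]
  show "eventually (\<lambda>n::nat. norm (exp (-c * real n powr q)) \<le> inverse (real n ^ 2)) at_top"
    by eventually_elim (simp add: field_simps)
  show "summable (\<lambda>n::nat. inverse (real n ^ 2))"
    using inverse_power_summable[of 2] by simp
qed

lemma eventually_le_neg_powr_if_limsup_neg:
  fixes s :: "nat \<Rightarrow> real" and p :: real
  assumes "limsup (\<lambda>n. ereal (s n / real n powr p)) < 0"
  obtains c where "c > 0" "eventually (\<lambda>n. s n \<le> - c * real n powr p) sequentially"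
proof -
  obtain z where z: "limsup (\<lambda>n. ereal (s n / real n powr p)) < ereal z" "z < 0"
    using ereal_dense2[OF assms] by auto
  have "eventually (\<lambda>n. ereal (s n / real n powr p) < ereal z) sequentially"
    using Limsup_lessD[OF z(1)] .
  with eventually_ge_at_top[of "1::nat"]
  have "eventually (\<lambda>n. s n \<le> - (- z) * real n powr p) sequentially"
    by eventually_elim (simp add: divide_less_eq)
  with z(2) show thesis
    by (intro that[of "- z"]) auto
qed

lemma exp_tendsto_0_if_eventually_le_neg_powr:
  fixes s :: "nat \<Rightarrow> real" and c p :: real
  assumes "c > 0" "p > 0" "eventually (\<lambda>n. s n \<le> - c * real n powr p) sequentially"
  shows "(\<lambda>n. exp (s n)) \<longlonglongrightarrow> 0"
proof (rule tendsto_sandwich[OF _ _ tendsto_const])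
  show "((\<lambda>n::nat. exp (- c * real n powr p)) \<longlongrightarrow> 0) sequentially"
    using assms(1,2) by real_asymp
  show "eventually (\<lambda>n. exp (s n) \<le> exp (- c * real n powr p)) sequentially"
    using assms(3) by eventually_elim simp
qed simp

context prob_space
begin

lemma Hoeffding_partial_sum_powr:
  fixes Y :: "nat \<Rightarrow> 'a \<Rightarrow> real" and a b \<epsilon> p :: real and n :: nat
  assumes indep: "indep_vars (\<lambda>_. borel) Y UNIV"
    and bounded: "\<And>k x. x \<in> space M \<Longrightarrow> Y k x \<in> {a..b}"
    and "a < b" "\<epsilon> > 0" "n \<ge> 1"
  shows "prob {x \<in> space M. (\<Sum>k=1..n. expectation (Y k)) + \<epsilon> * real n powr p \<le> (\<Sum>k=1..n. Y k x)}
    \<le> exp (- (2 * \<epsilon>\<^sup>2 / (b - a)\<^sup>2) * real n powr (2 * p - 1))"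
proof -
  interpret Hoeffding_ineq M "{1..n}" Y "\<lambda>_. a" "\<lambda>_. b" "\<Sum>k=1..n. expectation (Y k)"
  proof unfold_locales
    show "indep_vars (\<lambda>_. borel) Y {1..n}"
      by (rule indep_vars_subset[OF indep]) auto
  qed (use bounded in auto)
  have "prob {x \<in> space M. (\<Sum>k=1..n. expectation (Y k)) + \<epsilon> * real n powr p \<le> (\<Sum>k=1..n. Y k x)}
      \<le> exp (-2 * (\<epsilon> * real n powr p)\<^sup>2 / (real n * (b - a)\<^sup>2))"
    using Hoeffding_ineq_ge[of "\<epsilon> * real n powr p"] assms(3-5) by simp
  also have "-2 * (\<epsilon> * real n powr p)\<^sup>2 / (real n * (b - a)\<^sup>2)
      = - (2 * \<epsilon>\<^sup>2 / (b - a)\<^sup>2) * real n powr (2 * p - 1)"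
  proof -
    have "(real n powr p)\<^sup>2 = real n powr (2 * p)"
      by (simp add: power2_eq_square powr_add[symmetric])
    moreover have "real n powr (2 * p - 1) = real n powr (2 * p) / real n"
      using assms(5) by (simp add: powr_diff)
    ultimately show ?thesis
      using assms(3,5) by (simp add: power_mult_distrib field_simps)
  qed
  finally show ?thesis .
qed

lemma AE_eventually_partial_sum_less:
  fixes Y :: "nat \<Rightarrow> 'a \<Rightarrow> real" and a b \<epsilon> p :: real
  assumes indep: "indep_vars (\<lambda>_. borel) Y UNIV"
    and bounded: "\<And>k x. x \<in> space M \<Longrightarrow> Y k x \<in> {a..b}"
    and "a < b" "\<epsilon> > 0" "p > 1/2"
  shows "AE x in M. eventually (\<lambda>n.
    (\<Sum>k=1..n. Y k x) < (\<Sum>k=1..n. expectation (Y k)) + \<epsilon> * real n powr p) sequentially"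
proof -
  define A where "A n = {x \<in> space M. (\<Sum>k=1..n. expectation (Y k)) + \<epsilon> * real n powr p \<le> (\<Sum>k=1..n. Y k x)}"
    for n
  have [measurable]: "Y k \<in> borel_measurable M" for k
    using indep unfolding indep_vars_def by auto
  have [measurable]: "A n \<in> sets M" for n
    unfolding A_def by measurable
  have "summable (\<lambda>n. measure M (A n))"
  proof (rule summable_comparison_test_ev)
    show "eventually (\<lambda>n. norm (measure M (A n))
        \<le> exp (- (2 * \<epsilon>\<^sup>2 / (b - a)\<^sup>2) * real n powr (2 * p - 1))) sequentially"
      using eventually_ge_at_top[of "1::nat"]
      by eventually_elim (use Hoeffding_partial_sum_powr[OF assms(1-4)] in \<open>simp add: A_def\<close>)
    show "summable (\<lambda>n::nat. exp (- (2 * \<epsilon>\<^sup>2 / (b - a)\<^sup>2) * real n powr (2 * p - 1)))"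
      by (rule summable_exp_neg_powr) (use assms(3-5) in auto)
  qed
  then have "AE x in M. eventually (\<lambda>n. x \<in> space M - A n) sequentially"
    by (intro borel_cantelli_AE1) (auto simp: less_top[symmetric])
  then show ?thesis
    by eventually_elim (auto simp: A_def elim: eventually_mono)
qed

lemma AE_exp_partial_sum_tendsto_0:
  fixes Y :: "nat \<Rightarrow> 'a \<Rightarrow> real" and a b p :: real
  assumes indep: "indep_vars (\<lambda>_. borel) Y UNIV"
    and bounded: "\<And>k x. x \<in> space M \<Longrightarrow> Y k x \<in> {a..b}"
    and "a < b" "p > 1/2"
    and "limsup (\<lambda>n. ereal ((\<Sum>k=1..n. expectation (Y k)) / real n powr p)) < 0"
  shows "AE x in M. (\<lambda>n. exp (\<Sum>k=1..n. Y k x)) \<longlonglongrightarrow> 0"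
proof -
  define \<mu> where "\<mu> n = (\<Sum>k=1..n. expectation (Y k))" for n
  obtain c where "c > 0" and \<mu>_le: "eventually (\<lambda>n. \<mu> n \<le> - c * real n powr p) sequentially"
    using eventually_le_neg_powr_if_limsup_neg[of \<mu> p] assms(5) by (auto simp: \<mu>_def)
  have "AE x in M. eventually (\<lambda>n. (\<Sum>k=1..n. Y k x) < \<mu> n + c / 2 * real n powr p) sequentially"
    unfolding \<mu>_def
    by (rule AE_eventually_partial_sum_less[OF indep bounded]) (use assms(3,4) \<open>c > 0\<close> in auto)
  then show ?thesis
  proof eventually_elim
    case (elim x)
    with \<mu>_le have "eventually (\<lambda>n. (\<Sum>k=1..n. Y k x) \<le> - (c / 2) * real n powr p) sequentially"
      by eventually_elim simp
    then show ?case
      by (rule exp_tendsto_0_if_eventually_le_neg_powr[rotated 2]) (use \<open>c > 0\<close> assms(4) in auto)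
  qed
qed

end

theorem lemma4:
  fixes M :: "'a measure" and Z :: "nat \<Rightarrow> 'a \<Rightarrow> real"
    and \<alpha> \<beta> p :: real
  assumes "prob_space M"
    and "\<And>k. Z k \<in> borel_measurable M"
    and "prob_space.indep_vars M (\<lambda>_. borel) Z UNIV"
    and "\<alpha> > 0" and "\<beta> > 0"
    and "\<And>k \<omega>. \<omega> \<in> space M \<Longrightarrow> \<alpha> \<le> Z k \<omega> \<and> Z k \<omega> \<le> \<beta>"
    and "p > 1/2"
    and "limsup (\<lambda>n. ereal ((\<Sum>k=1..n. prob_space.expectation M (\<lambda>\<omega>. ln (Z k \<omega>))) / real n powr p)) < 0"
  shows "AE \<omega> in M. (\<lambda>n. \<Prod>k=1..n. Z k \<omega>) \<longlonglongrightarrow> 0"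
proof -
  interpret prob_space M by fact
  define Y where "Y = (\<lambda>k \<omega>. ln (Z k \<omega>))"
  have pos: "Z k \<omega> > 0" if "\<omega> \<in> space M" for k \<omega>
    using assms(4) assms(6)[OF that, of k] by linarith
  have indep: "indep_vars (\<lambda>_. borel) Y UNIV"
    unfolding Y_def by (rule indep_vars_compose2[OF assms(3)]) simp
  \<comment> \<open>The lower bound is lowered by 1 so that the range has positive width even when \<open>\<alpha> = \<beta>\<close>.\<close>
  have bounded: "Y k \<omega> \<in> {ln \<alpha> - 1..ln \<beta>}" if "\<omega> \<in> space M" for k \<omega>
  proof -
    have "ln \<alpha> \<le> Y k \<omega>" "Y k \<omega> \<le> ln \<beta>"
      using assms(4) assms(6)[OF that, of k] unfolding Y_def by (simp_all add: ln_mono)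
    then show ?thesis by simp
  qed
  obtain \<omega>\<^sub>0 where "\<omega>\<^sub>0 \<in> space M" using not_empty by blast
  then have "\<alpha> \<le> \<beta>" using assms(6) by fastforce
  then have "ln \<alpha> - 1 < ln \<beta>" using assms(4) ln_mono[of \<alpha> \<beta>] by linarith
  have "AE \<omega> in M. (\<lambda>n. exp (\<Sum>k=1..n. Y k \<omega>)) \<longlonglongrightarrow> 0"
    using AE_exp_partial_sum_tendsto_0[OF indep bounded \<open>ln \<alpha> - 1 < ln \<beta>\<close> assms(7)] assms(8)
    unfolding Y_def by blast
  then show ?thesis
    by (rule AE_mp) (auto intro!: AE_I2 simp: Y_def exp_sum pos)
qed

end
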